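(* Fix a reflection matrix $\mathbf\Phi$ and let $(\{\mathbf W_k^\star\}_{k\in\mathcal K},\mathbf R_0^\star)$ be an optimal solution of problem (SDR1.2). Define, for each $k\in\mathcal K$, $$\mathbf w_k^{\mathrm{opt,I}}=(\mathbf h_k^H\mathbf W_k^\star\mathbf h_k)^{-1/2}\,\mathbf W_k^\star\mathbf h_k,\qquad \mathbf R_0^{\mathrm{opt,I}}=\mathbf R_0^\star+\sum_{k\in\mathcal K}\mathbf W_k^\star-\sum_{k\in\mathcal K}\mathbf w_k^{\mathrm{opt,I}}(\mathbf w_k^{\mathrm{opt,I}})^H .$$ Then $\mathbf h_k^H\mathbf W_k^\star\mathbf h_k>0$ for all $k$ (so these are well defined), $\mathbf R_0^{\mathrm{opt,I}}\succeq\mathbf 0$, and $(\{\mathbf w_k^{\mathrm{opt,I}}\},\mathbf R_0^{\mathrm{opt,I}})$ is an optimal solution of problem (P1.1). In particular the relaxation is tight: (P1.1) and (SDR1.2) have the same optimal value.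
   Context: Let $M,N,K\ge1$ be integers and $\mathcal K=\{1,\dots,K\}$. Fixed data: $\mathbf G\in\mathbb C^{N\times M}$, $\mathbf h_{\mathrm d,k}\in\mathbb C^{M}$ and $\mathbf h_{\mathrm r,k}\in\mathbb C^{N}$ for $k\in\mathcal K$, thresholds $\Gamma_k>0$, noise powers $\sigma_k^2>0$, and a power budget $P_0>0$. A reflection matrix is $\mathbf\Phi=\mathrm{diag}(\mathbf v)$ with $\mathbf v\in\mathbb C^N$, $|v_n|=1$ for all $n$. For a given $\mathbf\Phi$ put $\mathbf h_k=\mathbf h_{\mathrm d,k}+\mathbf G^H\mathbf\Phi^H\mathbf h_{\mathrm r,k}$ and $\mathbf H_k=\mathbf h_k\mathbf h_k^H$. For $\mathbf w_1,\dots,\mathbf w_K\in\mathbb C^M$ and Hermitian $\mathbf R_0\succeq\mathbf 0$ in $\mathbb C^{M\times M}$, the Type-I SINR of user $k$ is $$\gamma_k^{\mathrm I}=\frac{|\mathbf h_k^H\mathbf w_k|^2}{\sum_{i\ne k}|\mathbf h_k^H\mathbf w_i|^2+\mathbf h_k^H\mathbf R_0\mathbf h_k+\sigma_k^2},$$ and the power constraint is $\sum_{k}\|\mathbf w_k\|^2+\mathrm{tr}(\mathbf R_0)\le P_0$. For Hermitian $\mathbf X\succeq\mathbf 0$ define $f(\mathbf X)=\mathrm{tr}\big((\mathbf G\mathbf X\mathbf G^H)^{-1}\big)$ if $\mathbf G\mathbf X\mathbf G^H$ is invertible and $f(\mathbf X)=+\infty$ otherwise. Problem (P1.1) (for fixed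 $\mathbf\Phi$): minimize $f\big(\sum_k\mathbf w_k\mathbf w_k^H+\mathbf R_0\big)$ over $\mathbf w_k\in\mathbb C^M$, $\mathbf R_0\succeq\mathbf 0$, subject to $\gamma_k^{\mathrm I}\ge\Gamma_k$ for all $k$ and the power constraint. Problem (SDR1.2) (for fixed $\mathbf\Phi$): minimize $f\big(\sum_k\mathbf W_k+\mathbf R_0\big)$ over Hermitian $\mathbf W_k\succeq\mathbf 0$ ($k\in\mathcal K$) and $\mathbf R_0\succeq\mathbf 0$, subject to $(1+\tfrac1{\Gamma_k})\mathrm{tr}(\mathbf H_k\mathbf W_k)-\mathrm{tr}\big(\mathbf H_k(\sum_{i}\mathbf W_i+\mathbf R_0)\big)\ge\sigma_k^2$ for all $k$, and $\sum_k\mathrm{tr}(\mathbf W_k)+\mathrm{tr}(\mathbf R_0)\le P_0$. *)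

theory Defs
  imports "HOL-Analysis.Analysis"
begin

text \<open>Complex matrices are rendered as complex^'c^'r (rows indexed by 'r, columns by 'c).
  Index types: 'm = BS antennas (M), 'n = RIS elements (N), 'k = users (K).\<close>

definition cadj :: "complex^'c^'r \<Rightarrow> complex^'r^'c" where
  "cadj A = (\<chi> i j. cnj (A $ j $ i))"

definition cvadj_mult :: "complex^'n \<Rightarrow> complex^'n \<Rightarrow> complex" where
  "cvadj_mult x y = (\<Sum>i\<in>UNIV. cnj (x $ i) * y $ i)"

definition outer :: "complex^'n \<Rightarrow> complex^'n^'n" where
  "outer w = (\<chi> i j. w $ i * cnj (w $ j))"

definition hermitian :: "complex^'n^'n \<Rightarrow> bool" where
  "hermitian A \<longleftrightarrow> cadj A = A"

definition psd :: "complex^'n^'n \<Rightarrow> bool" where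
  "psd A \<longleftrightarrow> hermitian A \<and> (\<forall>x. 0 \<le> Re (cvadj_mult x (A *v x)))"

definition diagm :: "complex^'n \<Rightarrow> complex^'n^'n" where
  "diagm v = (\<chi> i j. if i = j then v $ i else 0)"

text \<open>Effective channel h_k = h_{d,k} + G^H Phi^H h_{r,k}, Phi = diag v.\<close>
definition eff_chan :: "complex^'m^'n \<Rightarrow> complex^'n \<Rightarrow> complex^'m \<Rightarrow> complex^'n \<Rightarrow> complex^'m" where
  "eff_chan G v hdk hrk = hdk + cadj G *v (cadj (diagm v) *v hrk)"

text \<open>Objective f(X) = tr((G X G^H)^{-1}) if invertible, +infinity otherwise.
  (The trace of the inverse of an invertible Hermitian matrix is real; we take its real part.)\<close>
definition fobj :: "complex^'m^'n \<Rightarrow> complex^'m^'m \<Rightarrow> ereal" where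
  "fobj G X = (if invertible (G ** X ** cadj G)
               then ereal (Re (trace (matrix_inv (G ** X ** cadj G))))
               else \<infinity>)"

definition sinr1 :: "complex^'m \<Rightarrow> real \<Rightarrow> ('k::finite \<Rightarrow> complex^'m) \<Rightarrow> complex^'m^'m \<Rightarrow> 'k \<Rightarrow> real" where
  "sinr1 h sigma2 w R0 k =
     (cmod (cvadj_mult h (w k)))\<^sup>2 /
     ((\<Sum>i\<in>UNIV - {k}. (cmod (cvadj_mult h (w i)))\<^sup>2) + Re (cvadj_mult h (R0 *v h)) + sigma2)"

definition feasP11 ::
  "('k::finite \<Rightarrow> complex^'m) \<Rightarrow> ('k \<Rightarrow> real) \<Rightarrow> ('k \<Rightarrow> real) \<Rightarrow> real
     \<Rightarrow> (('k \<Rightarrow> complex^'m) \<times> (complex^'m^'m)) set" where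
  "feasP11 h Gam sigma2 P0 = {(w, R0). psd R0 \<and>
     (\<forall>k. sinr1 (h k) (sigma2 k) w R0 k \<ge> Gam k) \<and>
     (\<Sum>k\<in>UNIV. (norm (w k))\<^sup>2) + Re (trace R0) \<le> P0}"

definition objP11 :: "complex^'m^'n \<Rightarrow> ('k::finite \<Rightarrow> complex^'m) \<times> (complex^'m^'m) \<Rightarrow> ereal" where
  "objP11 G p = fobj G ((\<Sum>k\<in>UNIV. outer (fst p k)) + snd p)"

definition optP11 ::
  "complex^'m^'n \<Rightarrow> ('k::finite \<Rightarrow> complex^'m) \<Rightarrow> ('k \<Rightarrow> real) \<Rightarrow> ('k \<Rightarrow> real) \<Rightarrow> real
     \<Rightarrow> ('k \<Rightarrow> complex^'m) \<times> (complex^'m^'m) \<Rightarrow> bool" where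
  "optP11 G h Gam sigma2 P0 p \<longleftrightarrow> p \<in> feasP11 h Gam sigma2 P0 \<and>
     (\<forall>q\<in>feasP11 h Gam sigma2 P0. objP11 G p \<le> objP11 G q)"

definition feasSDR ::
  "('k::finite \<Rightarrow> complex^'m) \<Rightarrow> ('k \<Rightarrow> real) \<Rightarrow> ('k \<Rightarrow> real) \<Rightarrow> real
     \<Rightarrow> (('k \<Rightarrow> complex^'m^'m) \<times> (complex^'m^'m)) set" where
  "feasSDR h Gam sigma2 P0 = {(W, R0). (\<forall>k. psd (W k)) \<and> psd R0 \<and>
     (\<forall>k. (1 + 1 / Gam k) * Re (trace (outer (h k) ** W k))
          - Re (trace (outer (h k) ** ((\<Sum>i\<in>UNIV. W i) + R0))) \<ge> sigma2 k) \<and>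
     (\<Sum>k\<in>UNIV. Re (trace (W k))) + Re (trace R0) \<le> P0}"

definition objSDR :: "complex^'m^'n \<Rightarrow> ('k::finite \<Rightarrow> complex^'m^'m) \<times> (complex^'m^'m) \<Rightarrow> ereal" where
  "objSDR G p = fobj G ((\<Sum>k\<in>UNIV. fst p k) + snd p)"

definition optSDR ::
  "complex^'m^'n \<Rightarrow> ('k::finite \<Rightarrow> complex^'m) \<Rightarrow> ('k \<Rightarrow> real) \<Rightarrow> ('k \<Rightarrow> real) \<Rightarrow> real
     \<Rightarrow> ('k \<Rightarrow> complex^'m^'m) \<times> (complex^'m^'m) \<Rightarrow> bool" where
  "optSDR G h Gam sigma2 P0 p \<longleftrightarrow> p \<in> feasSDR h Gam sigma2 P0 \<and>
     (\<forall>q\<in>feasSDR h Gam sigma2 P0. objSDR G p \<le> objSDR G q)"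

end

theory Submission
  imports Defs
begin

text \<open>Every beamforming pair \<open>(w, R)\<close> of (P1.1) lifts to the point \<open>(w w\<^sup>H, R)\<close> of (SDR1.2)
  with the same objective, and the SINR condition \<open>\<gamma>\<^sub>k \<ge> \<Gamma>\<^sub>k\<close> is equivalent to the linear SDR
  constraint evaluated at the lift, so (SDR1.2) relaxes (P1.1). Conversely, from an SDR optimum
  \<open>(W\<^sup>\<star>, R\<^sub>0\<^sup>\<star>)\<close> extract \<open>w\<^sub>k = W\<^sub>k\<^sup>\<star> h\<^sub>k / (h\<^sub>k\<^sup>H W\<^sub>k\<^sup>\<star> h\<^sub>k)\<^sup>1\<^sup>/\<^sup>2\<close> and push the remainder
  \<open>W\<^sub>k\<^sup>\<star> - w\<^sub>k w\<^sub>k\<^sup>H\<close> into the radar covariance. By Cauchy-Schwarz for the form of \<open>W\<^sub>k\<^sup>\<star>\<close> this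
  remainder is positive semidefinite, while \<open>|h\<^sub>k\<^sup>H w\<^sub>k|\<^sup>2 = h\<^sub>k\<^sup>H W\<^sub>k\<^sup>\<star> h\<^sub>k\<close> and the total covariance
  \<open>\<Sum> w\<^sub>k w\<^sub>k\<^sup>H + R\<close> is unchanged. Hence the SDR constraints, the power and the objective all carry
  over, giving a feasible point of (P1.1) that attains the relaxed optimum.\<close>

lemma cvadj_mult_add_right: "cvadj_mult x (y + z) = cvadj_mult x y + cvadj_mult x z"
  by (simp add: cvadj_mult_def distrib_left sum.distrib)

lemma cvadj_mult_add_left: "cvadj_mult (x + z) y = cvadj_mult x y + cvadj_mult z y"
  by (simp add: cvadj_mult_def distrib_right sum.distrib)

lemma cvadj_mult_diff_right: "cvadj_mult x (y - z) = cvadj_mult x y - cvadj_mult x z"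
  by (simp add: cvadj_mult_def right_diff_distrib sum_subtractf)

lemma cvadj_mult_scale_right: "cvadj_mult x (c *s y) = c * cvadj_mult x y"
  by (simp add: cvadj_mult_def sum_distrib_left mult.left_commute)

lemma cvadj_mult_scale_left: "cvadj_mult (c *s x) y = cnj c * cvadj_mult x y"
  by (simp add: cvadj_mult_def sum_distrib_left mult.assoc)

lemma cvadj_mult_sum_right: "cvadj_mult x (sum f S) = (\<Sum>k\<in>S. cvadj_mult x (f k))"
  unfolding cvadj_mult_def by (simp add: sum_distrib_left sum.swap[where A = UNIV])

lemma cvadj_mult_commute: "cvadj_mult y x = cnj (cvadj_mult x y)"
  by (simp add: cvadj_mult_def mult.commute)

lemma cvadj_mult_expand:
  "cvadj_mult x (A *v y) = (\<Sum>i\<in>UNIV. \<Sum>j\<in>UNIV. cnj (x$i) * A$i$j * y$j)"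
  by (simp add: cvadj_mult_def matrix_vector_mult_def sum_distrib_left mult.assoc)

lemma matrix_vector_mult_sum_left: "(sum f S) *v x = (\<Sum>k\<in>S. f k *v x)"
  by (simp add: vec_eq_iff matrix_vector_mult_def sum_distrib_right sum_component
      sum.swap[where B = S])

lemma matrix_vector_mult_scale_right: "A *v (c *s y) = c *s (A *v (y::complex^'n))"
  by (simp add: vec_eq_iff matrix_vector_mult_def sum_distrib_left mult_ac)

lemma outer_mult_vector: "outer w *v x = cvadj_mult w x *s w"
  by (simp add: vec_eq_iff matrix_vector_mult_def outer_def cvadj_mult_def sum_distrib_left mult_ac)

lemma cvadj_mult_outer: "cvadj_mult x (outer w *v x) = complex_of_real ((cmod (cvadj_mult x w))\<^sup>2)"
proof -
  have "cvadj_mult x (outer w *v x) = cvadj_mult x w * cnj (cvadj_mult x w)"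
    by (simp add: outer_mult_vector cvadj_mult_scale_right cvadj_mult_commute[of w x] mult.commute)
  then show ?thesis by (metis complex_norm_square of_real_power)
qed

lemma trace_sum: "trace (sum f S) = (\<Sum>k\<in>S. trace (f k))"
  by (simp add: trace_def sum_component sum.swap[where A = UNIV])

lemma trace_outer_mult: "trace (outer h ** W) = cvadj_mult h (W *v h)"
proof -
  have "trace (outer h ** W) = (\<Sum>i\<in>UNIV. \<Sum>k\<in>UNIV. h$i * cnj (h$k) * W$k$i)"
    by (simp add: trace_def matrix_matrix_mult_def outer_def)
  also have "\<dots> = (\<Sum>k\<in>UNIV. \<Sum>i\<in>UNIV. h$i * cnj (h$k) * W$k$i)" by (rule sum.swap)
  also have "\<dots> = cvadj_mult h (W *v h)"
    by (simp add: cvadj_mult_def matrix_vector_mult_def sum_distrib_left mult_ac)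
  finally show ?thesis .
qed

lemma Re_trace_outer: "Re (trace (outer w)) = (norm w)\<^sup>2"
proof -
  have "Re (trace (outer w)) = (\<Sum>i\<in>UNIV. (cmod (w$i))\<^sup>2)"
    by (simp add: trace_def outer_def complex_norm_square[symmetric] del: of_real_power)
  then show ?thesis by (simp add: norm_vec_def L2_set_def sum_nonneg)
qed

lemma hermitian_entry: "hermitian A \<Longrightarrow> cnj (A$i$j) = A$j$i"
  unfolding hermitian_def cadj_def by (metis complex_cnj_cnj vec_lambda_beta)

lemma hermitian_cvadj_mult_swap:
  assumes "hermitian A"
  shows "cvadj_mult x (A *v y) = cnj (cvadj_mult y (A *v x))"
proof -
  have "cnj (cvadj_mult y (A *v x)) = (\<Sum>i\<in>UNIV. \<Sum>j\<in>UNIV. y$i * cnj (A$i$j) * cnj (x$j))"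
    by (simp add: cvadj_mult_expand)
  also have "\<dots> = (\<Sum>j\<in>UNIV. \<Sum>i\<in>UNIV. y$i * cnj (A$i$j) * cnj (x$j))" by (rule sum.swap)
  also have "\<dots> = cvadj_mult x (A *v y)"
    by (simp add: cvadj_mult_expand hermitian_entry[OF assms] mult_ac)
  finally show ?thesis by simp
qed

lemma hermitian_quadratic_form_real:
  "hermitian A \<Longrightarrow> cvadj_mult x (A *v x) = complex_of_real (Re (cvadj_mult x (A *v x)))"
  using hermitian_cvadj_mult_swap[of A x x] by (metis Reals_cnj_iff complex_is_Real_iff of_real_Re)

lemma hermitian_add: "hermitian A \<Longrightarrow> hermitian B \<Longrightarrow> hermitian (A + B)"
  by (simp add: hermitian_def cadj_def vec_eq_iff)

lemma hermitian_diff: "hermitian A \<Longrightarrow> hermitian B \<Longrightarrow> hermitian (A - B)"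
  by (simp add: hermitian_def cadj_def vec_eq_iff)

lemma hermitian_outer: "hermitian (outer w)"
  by (simp add: hermitian_def cadj_def outer_def vec_eq_iff)

lemma psd_quadratic_form_nonneg: "psd A \<Longrightarrow> 0 \<le> Re (cvadj_mult x (A *v x))"
  by (simp add: psd_def)

lemma psd_zero: "psd (0::complex^'n^'n)"
  by (simp add: psd_def hermitian_def cadj_def vec_eq_iff cvadj_mult_def)

lemma psd_add: "psd A \<Longrightarrow> psd B \<Longrightarrow> psd (A + B)"
  by (simp add: psd_def hermitian_add matrix_vector_mult_add_rdistrib cvadj_mult_add_right)

lemma psd_sum: "(\<And>k. k \<in> S \<Longrightarrow> psd (f k)) \<Longrightarrow> psd (sum f S)"
  by (induction S rule: infinite_finite_induct) (auto simp: psd_zero psd_add)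

lemma psd_outer: "psd (outer w)"
  by (simp add: psd_def hermitian_outer cvadj_mult_outer)

lemma psd_cauchy_schwarz:
  assumes W: "psd W" and a_pos: "0 < Re (cvadj_mult h (W *v h))"
  shows "(cmod (cvadj_mult x (W *v h)))\<^sup>2 \<le> Re (cvadj_mult x (W *v x)) * Re (cvadj_mult h (W *v h))"
proof -
  define a where "a = Re (cvadj_mult h (W *v h))"
  define b where "b = Re (cvadj_mult x (W *v x))"
  define c where "c = cvadj_mult x (W *v h)"
  define n where "n = (cmod c)\<^sup>2"
  define t where "t = - cnj c / complex_of_real a"
  have H: "hermitian W" using W by (simp add: psd_def)
  have ha: "cvadj_mult h (W *v h) = complex_of_real a"
    unfolding a_def by (rule hermitian_quadratic_form_real[OF H])
  have hb: "cvadj_mult x (W *v x) = complex_of_real b"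
    unfolding b_def by (rule hermitian_quadratic_form_real[OF H])
  have hc: "cvadj_mult h (W *v x) = cnj c"
    unfolding c_def using hermitian_cvadj_mult_swap[OF H, of h x] by simp
  have cc: "cnj c * c = complex_of_real n"
    unfolding n_def by (metis complex_norm_square mult.commute of_real_power)
  have a0: "a > 0" using a_pos by (simp add: a_def)
  \<comment> \<open>evaluate the form at \<open>x + t h\<close>, with \<open>t\<close> minimising it\<close>
  have "0 \<le> Re (cvadj_mult (x + t *s h) (W *v (x + t *s h)))"
    using W by (simp add: psd_def)
  also have "cvadj_mult (x + t *s h) (W *v (x + t *s h))
      = complex_of_real b + t * c + cnj t * cnj c + cnj t * t * complex_of_real a"
    by (simp add: matrix_vector_right_distrib matrix_vector_mult_scale_right cvadj_mult_add_right
        cvadj_mult_add_left cvadj_mult_scale_right cvadj_mult_scale_left ha hb hc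
        c_def[symmetric] algebra_simps)
  also have "t * c = complex_of_real (- n / a)"
    unfolding t_def using cc by (simp add: mult.commute)
  also have "cnj t * cnj c = complex_of_real (- n / a)"
    unfolding t_def using cc by (simp add: mult.commute)
  also have "cnj t * t * complex_of_real a = complex_of_real (n / a)"
    unfolding t_def using cc a0 by (simp add: field_simps power2_eq_square)
  finally have "0 \<le> b - n / a" by simp
  then show ?thesis using a0 by (simp add: n_def c_def b_def a_def field_simps)
qed

definition sdr_beam :: "complex^'m^'m \<Rightarrow> complex^'m \<Rightarrow> complex^'m" where
  "sdr_beam W h = complex_of_real (1 / sqrt (Re (cvadj_mult h (W *v h)))) *s (W *v h)"

lemma cvadj_mult_sdr_beam:
  assumes W: "psd W" and a_pos: "0 < Re (cvadj_mult h (W *v h))"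
  shows "(cmod (cvadj_mult h (sdr_beam W h)))\<^sup>2 = Re (cvadj_mult h (W *v h))"
proof -
  define a where "a = Re (cvadj_mult h (W *v h))"
  have "cvadj_mult h (W *v h) = complex_of_real a"
    unfolding a_def by (rule hermitian_quadratic_form_real) (use W psd_def in auto)
  then have "cvadj_mult h (sdr_beam W h) = complex_of_real (a / sqrt a)"
    by (simp add: sdr_beam_def cvadj_mult_scale_right a_def)
  moreover have "(a / sqrt a)\<^sup>2 = a"
    using a_pos by (simp add: a_def power_divide power2_eq_square)
  ultimately show ?thesis
    unfolding a_def[symmetric] by (simp only: norm_of_real power2_abs)
qed

lemma psd_diff_outer_sdr_beam:
  assumes W: "psd W" and a_pos: "0 < Re (cvadj_mult h (W *v h))"
  shows "psd (W - outer (sdr_beam W h))"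
proof -
  define a where "a = Re (cvadj_mult h (W *v h))"
  have "(cmod (cvadj_mult x (sdr_beam W h)))\<^sup>2 \<le> Re (cvadj_mult x (W *v x))" for x
  proof -
    have "cmod (cvadj_mult x (sdr_beam W h)) = cmod (cvadj_mult x (W *v h)) / sqrt a"
      using a_pos by (simp add: sdr_beam_def cvadj_mult_scale_right norm_mult norm_divide a_def)
    then have "(cmod (cvadj_mult x (sdr_beam W h)))\<^sup>2 = (cmod (cvadj_mult x (W *v h)))\<^sup>2 / a"
      using a_pos by (simp add: power_divide a_def)
    also have "\<dots> \<le> Re (cvadj_mult x (W *v x))"
      using psd_cauchy_schwarz[OF W a_pos, of x] a_pos by (simp add: divide_le_eq a_def)
    finally show ?thesis .
  qed
  moreover have "hermitian (W - outer (sdr_beam W h))"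
    using W by (simp add: psd_def hermitian_diff hermitian_outer)
  ultimately show ?thesis
    by (simp add: psd_def matrix_vector_mult_diff_rdistrib cvadj_mult_diff_right cvadj_mult_outer)
qed

lemma sinr_threshold_iff:
  fixes s :: "'k::finite \<Rightarrow> real"
  assumes s: "\<And>i. 0 \<le> s i" and r: "0 \<le> r" and sigma: "0 < sigma2" and Gam: "0 < Gam"
  shows "Gam \<le> s k / ((\<Sum>i\<in>UNIV - {k}. s i) + r + sigma2)
     \<longleftrightarrow> sigma2 \<le> (1 + 1 / Gam) * s k - ((\<Sum>i\<in>UNIV. s i) + r)"
proof -
  define D where "D = (\<Sum>i\<in>UNIV - {k}. s i) + r + sigma2"
  have D_pos: "0 < D" using sum_nonneg[of "UNIV - {k}" s] s r sigma by (simp add: D_def)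
  have "Gam \<le> s k / D \<longleftrightarrow> D \<le> s k / Gam"
    using D_pos Gam by (simp add: le_divide_eq mult.commute)
  moreover have "(\<Sum>i\<in>UNIV. s i) = s k + (\<Sum>i\<in>UNIV - {k}. s i)" by (simp add: sum.remove)
  ultimately show ?thesis by (simp add: D_def algebra_simps)
qed

lemma sinr1_ge_iff:
  assumes R: "psd R" and sigma: "0 < sigma2" and Gam: "0 < Gam"
  shows "Gam \<le> sinr1 h sigma2 w R k
     \<longleftrightarrow> sigma2 \<le> (1 + 1 / Gam) * Re (trace (outer h ** outer (w k)))
                   - Re (trace (outer h ** ((\<Sum>i\<in>UNIV. outer (w i)) + R)))"
proof -
  define s where "s i = (cmod (cvadj_mult h (w i)))\<^sup>2" for i
  have "Re (trace (outer h ** outer (w k))) = s k"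
    by (simp add: trace_outer_mult cvadj_mult_outer s_def)
  moreover have "Re (trace (outer h ** ((\<Sum>i\<in>UNIV. outer (w i)) + R)))
      = (\<Sum>i\<in>UNIV. s i) + Re (cvadj_mult h (R *v h))"
    by (simp add: trace_outer_mult matrix_vector_mult_add_rdistrib matrix_vector_mult_sum_left
        cvadj_mult_add_right cvadj_mult_sum_right cvadj_mult_outer s_def)
  moreover have "sinr1 h sigma2 w R k
      = s k / ((\<Sum>i\<in>UNIV - {k}. s i) + Re (cvadj_mult h (R *v h)) + sigma2)"
    by (simp add: sinr1_def s_def)
  ultimately show ?thesis
    using sinr_threshold_iff[of s, OF _ psd_quadratic_form_nonneg[OF R] sigma Gam]
    by (simp add: s_def)
qed

lemma Re_trace_total_covariance:
  "Re (trace ((\<Sum>k\<in>UNIV. outer (w k)) + R)) = (\<Sum>k\<in>UNIV. (norm (w k))\<^sup>2) + Re (trace R)"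
  by (simp add: trace_add trace_sum Re_trace_outer)

lemma feasP11_lift_feasSDR:
  assumes feas: "(w, R) \<in> feasP11 h Gam sigma2 P0"
    and Gam: "\<forall>k. 0 < Gam k" and sigma: "\<forall>k. 0 < sigma2 k"
  shows "((\<lambda>k. outer (w k)), R) \<in> feasSDR h Gam sigma2 P0"
proof -
  from feas have R: "psd R" and sinr: "\<And>k. Gam k \<le> sinr1 (h k) (sigma2 k) w R k"
    and power: "(\<Sum>k\<in>UNIV. (norm (w k))\<^sup>2) + Re (trace R) \<le> P0"
    by (auto simp: feasP11_def)
  have "sigma2 k \<le> (1 + 1 / Gam k) * Re (trace (outer (h k) ** outer (w k)))
                   - Re (trace (outer (h k) ** ((\<Sum>i\<in>UNIV. outer (w i)) + R)))" for k
    using sinr[of k] sinr1_ge_iff[OF R] Gam sigma by blast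
  moreover have "(\<Sum>k\<in>UNIV. Re (trace (outer (w k)))) + Re (trace R) \<le> P0"
    using power by (simp add: Re_trace_outer)
  ultimately show ?thesis using R by (simp add: feasSDR_def psd_outer)
qed

lemma feasSDR_quadratic_form_pos:
  assumes feas: "(W, R0) \<in> feasSDR h Gam sigma2 P0"
    and Gam: "0 < Gam k" and sigma: "0 < sigma2 k"
  shows "0 < Re (cvadj_mult (h k) (W k *v h k))"
proof -
  define q where "q i = Re (cvadj_mult (h k) (W i *v h k))" for i
  from feas have W: "\<And>i. psd (W i)" and R0: "psd R0"
    and cons: "sigma2 k \<le> (1 + 1 / Gam k) * Re (trace (outer (h k) ** W k))
                  - Re (trace (outer (h k) ** ((\<Sum>i\<in>UNIV. W i) + R0)))"
    by (auto simp: feasSDR_def)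
  have cons_q: "sigma2 k \<le> (1 + 1 / Gam k) * q k - ((\<Sum>i\<in>UNIV. q i) + Re (cvadj_mult (h k) (R0 *v h k)))"
    using cons by (simp add: trace_outer_mult matrix_vector_mult_add_rdistrib
        matrix_vector_mult_sum_left cvadj_mult_add_right cvadj_mult_sum_right q_def)
  have "(\<Sum>i\<in>UNIV. q i) = q k + (\<Sum>i\<in>UNIV - {k}. q i)" by (simp add: sum.remove)
  moreover have "0 \<le> (\<Sum>i\<in>UNIV - {k}. q i)"
    by (simp add: sum_nonneg q_def psd_quadratic_form_nonneg W)
  moreover have "(1 + 1 / Gam k) * q k = q k + q k / Gam k" by (simp add: algebra_simps)
  ultimately have "0 < q k / Gam k"
    using cons_q sigma psd_quadratic_form_nonneg[OF R0, of "h k"] by linarith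
  then show ?thesis using Gam by (simp add: q_def zero_less_divide_iff)
qed

lemma feasSDR_extract_feasP11:
  assumes feas: "(W, R0) \<in> feasSDR h Gam sigma2 P0"
    and Gam: "\<forall>k. 0 < Gam k" and sigma: "\<forall>k. 0 < sigma2 k"
  shows "((\<lambda>k. sdr_beam (W k) (h k)),
          R0 + (\<Sum>k\<in>UNIV. W k) - (\<Sum>k\<in>UNIV. outer (sdr_beam (W k) (h k))))
         \<in> feasP11 h Gam sigma2 P0"
    (is "(?w, ?R) \<in> _")
proof -
  define w where "w = ?w"
  define R where "R = ?R"
  from feas have W: "\<And>k. psd (W k)" and R0: "psd R0"
    and cons: "\<And>k. sigma2 k \<le> (1 + 1 / Gam k) * Re (trace (outer (h k) ** W k))
                  - Re (trace (outer (h k) ** ((\<Sum>i\<in>UNIV. W i) + R0)))"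
    and power: "(\<Sum>k\<in>UNIV. Re (trace (W k))) + Re (trace R0) \<le> P0"
    by (auto simp: feasSDR_def)
  have a_pos: "0 < Re (cvadj_mult (h k) (W k *v h k))" for k
    using feasSDR_quadratic_form_pos[OF feas] Gam sigma by blast
  have "R = R0 + (\<Sum>k\<in>UNIV. W k - outer (w k))" by (simp add: R_def w_def sum_subtractf)
  then have R: "psd R"
    using psd_diff_outer_sdr_beam[OF W a_pos] by (simp add: psd_add psd_sum R0 w_def)
  have total: "(\<Sum>k\<in>UNIV. outer (w k)) + R = (\<Sum>k\<in>UNIV. W k) + R0"
    unfolding R_def w_def by simp
  have gain: "Re (trace (outer (h k) ** outer (w k))) = Re (trace (outer (h k) ** W k))" for k
    using cvadj_mult_sdr_beam[OF W a_pos] by (simp add: trace_outer_mult cvadj_mult_outer w_def)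
  have "Gam k \<le> sinr1 (h k) (sigma2 k) w R k" for k
  proof -
    have "0 < sigma2 k" "0 < Gam k" using sigma Gam by auto
    then show ?thesis using cons[of k] by (simp add: sinr1_ge_iff[OF R] total gain)
  qed
  moreover have "(\<Sum>k\<in>UNIV. (norm (w k))\<^sup>2) + Re (trace R) \<le> P0"
    using Re_trace_total_covariance[of w R] power by (simp add: total trace_add trace_sum)
  ultimately show ?thesis using R by (simp add: feasP11_def w_def R_def)
qed

lemma tight_relaxation:
  fixes f :: "'a \<Rightarrow> 'c::complete_linorder" and g :: "'b \<Rightarrow> 'c"
  assumes lift: "\<And>q. q \<in> A \<Longrightarrow> L q \<in> B \<and> g (L q) = f q"
    and p: "p \<in> A" and p': "p' \<in> B" and same: "f p = g p'"
    and best: "\<forall>q\<in>B. g p' \<le> g q"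
  shows "(\<forall>q\<in>A. f p \<le> f q) \<and> (INF q\<in>A. f q) = (INF q\<in>B. g q)"
proof -
  have opt: "\<forall>q\<in>A. f p \<le> f q" using lift best same by metis
  have "(INF q\<in>A. f q) = f p"
    using opt p by (metis INF_greatest INF_lower antisym)
  moreover have "(INF q\<in>B. g q) = g p'"
    using best p' by (metis INF_greatest INF_lower antisym)
  ultimately show ?thesis using opt same by simp
qed

theorem proposition1:
  fixes G :: "complex^'m^'n"
    and hdir :: "'k::finite \<Rightarrow> complex^'m"
    and hris :: "'k \<Rightarrow> complex^'n"
    and Gam sigma2 :: "'k \<Rightarrow> real"
    and P0 :: real
    and v :: "complex^'n"
    and Wopt :: "'k \<Rightarrow> complex^'m^'m"
    and Ropt :: "complex^'m^'m"
  defines "h \<equiv> (\<lambda>k. eff_chan G v (hdir k) (hris k))"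
  assumes Gam_pos: "\<forall>k. Gam k > 0"
    and sigma_pos: "\<forall>k. sigma2 k > 0"
    and P0_pos: "P0 > 0"
    and unimod: "\<forall>n. cmod (v $ n) = 1"
    and opt: "optSDR G h Gam sigma2 P0 (Wopt, Ropt)"
  shows "let w = (\<lambda>k. complex_of_real (1 / sqrt (Re (cvadj_mult (h k) (Wopt k *v h k))))
                       *s (Wopt k *v h k));
             R = Ropt + (\<Sum>k\<in>UNIV. Wopt k) - (\<Sum>k\<in>UNIV. outer (w k))
         in (\<forall>k. Im (cvadj_mult (h k) (Wopt k *v h k)) = 0 \<and>
                  Re (cvadj_mult (h k) (Wopt k *v h k)) > 0)
            \<and> psd R
            \<and> optP11 G h Gam sigma2 P0 (w, R)
            \<and> (INF p\<in>feasP11 h Gam sigma2 P0. objP11 G p)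
                = (INF p\<in>feasSDR h Gam sigma2 P0. objSDR G p)"
proof -
  define w where "w = (\<lambda>k. sdr_beam (Wopt k) (h k))"
  define R where "R = Ropt + (\<Sum>k\<in>UNIV. Wopt k) - (\<Sum>k\<in>UNIV. outer (w k))"
  from opt have feas: "(Wopt, Ropt) \<in> feasSDR h Gam sigma2 P0"
    and best: "\<forall>q\<in>feasSDR h Gam sigma2 P0. objSDR G (Wopt, Ropt) \<le> objSDR G q"
    by (simp_all add: optSDR_def)
  have gains: "Im (cvadj_mult (h k) (Wopt k *v h k)) = 0 \<and> Re (cvadj_mult (h k) (Wopt k *v h k)) > 0"
    for k
  proof
    have "hermitian (Wopt k)" using feas by (simp add: feasSDR_def psd_def)
    then show "Im (cvadj_mult (h k) (Wopt k *v h k)) = 0"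
      using hermitian_quadratic_form_real by (metis Im_complex_of_real)
    show "Re (cvadj_mult (h k) (Wopt k *v h k)) > 0"
      using feasSDR_quadratic_form_pos[OF feas] Gam_pos sigma_pos by blast
  qed
  have feasw: "(w, R) \<in> feasP11 h Gam sigma2 P0"
    unfolding w_def R_def using feasSDR_extract_feasP11[OF feas Gam_pos sigma_pos] by simp
  have lift: "(\<lambda>k. outer (fst q k), snd q) \<in> feasSDR h Gam sigma2 P0
      \<and> objSDR G (\<lambda>k. outer (fst q k), snd q) = objP11 G q"
    if "q \<in> feasP11 h Gam sigma2 P0" for q
    using that feasP11_lift_feasSDR[of "fst q" "snd q"] Gam_pos sigma_pos
    by (simp add: objP11_def objSDR_def)
  have "objP11 G (w, R) = objSDR G (Wopt, Ropt)"
    by (simp add: objP11_def objSDR_def R_def algebra_simps)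
  note tight = tight_relaxation[where f = "objP11 G" and g = "objSDR G"
      and L = "\<lambda>q. (\<lambda>k. outer (fst q k), snd q)", OF lift feasw feas this best]
  show ?thesis
    using gains feasw tight unfolding Let_def optP11_def w_def R_def sdr_beam_def
    by (simp add: feasP11_def)
qed

end
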